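(* Let $\Gamma=(\mathcal{V},\mathcal{H})$ be an oriented hypergraph. Up to changing the orientation of some hyperedges, $\Gamma$ is bipartite if and only if $\Gamma$ is vertex-bipartite.
   Context: An oriented hypergraph is a pair $\Gamma=(\mathcal{V},\mathcal{H})$ where $\mathcal{V}$ is a finite set of vertices and each hyperedge $h\in\mathcal{H}$ is a pair $(h_{in},h_{out})$ of disjoint nonempty subsets of $\mathcal{V}$ (inputs and outputs); standing assumption: no isolated vertices. Changing the orientation of $h$ replaces $(h_{in},h_{out})$ by $(h_{out},h_{in})$. $\Gamma$ is bipartite if $\mathcal{V}=\mathcal{V}_1\sqcup\mathcal{V}_2$ such that every hyperedge either has all its inputs in $\mathcal{V}_1$ and all its outputs in $\mathcal{V}_2$, or vice versa. $\Gamma$ is vertex-bipartite if $\mathcal{H}=\mathcal{H}_1\sqcup\mathcal{H}_2$ such that for every vertex $v$, either $v$ is an input only for hyperedges in $\mathcal{H}_1$ and an output only for hyperedges in $\mathcal{H}_2$, or $v$ is an input only for hyperedges in $\mathcal{H}_2$ and an output only for hyperedges in $\mathcal{H}_1$. *)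

theory Defs
  imports Main
begin

text \<open>Labels allow repeated hyperedges.\<close>

definition oriented_hypergraph ::
  "'v set \<Rightarrow> 'h set \<Rightarrow> ('h \<Rightarrow> 'v set) \<Rightarrow> ('h \<Rightarrow> 'v set) \<Rightarrow> bool" where
  "oriented_hypergraph V H inp outp \<longleftrightarrow>
     finite V \<and> finite H \<and>
     (\<forall>h\<in>H. inp h \<subseteq> V \<and> outp h \<subseteq> V \<and> inp h \<noteq> {} \<and> outp h \<noteq> {}
              \<and> inp h \<inter> outp h = {}) \<and>
     (\<forall>v\<in>V. \<exists>h\<in>H. v \<in> inp h \<or> v \<in> outp h)"

definition reorient_in :: "'h set \<Rightarrow> ('h \<Rightarrow> 'v set) \<Rightarrow> ('h \<Rightarrow> 'v set) \<Rightarrow> 'h \<Rightarrow> 'v set" where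
  "reorient_in S inp outp = (\<lambda>h. if h \<in> S then outp h else inp h)"

definition reorient_out :: "'h set \<Rightarrow> ('h \<Rightarrow> 'v set) \<Rightarrow> ('h \<Rightarrow> 'v set) \<Rightarrow> 'h \<Rightarrow> 'v set" where
  "reorient_out S inp outp = (\<lambda>h. if h \<in> S then inp h else outp h)"

definition hg_bipartite ::
  "'v set \<Rightarrow> 'h set \<Rightarrow> ('h \<Rightarrow> 'v set) \<Rightarrow> ('h \<Rightarrow> 'v set) \<Rightarrow> bool" where
  "hg_bipartite V H inp outp \<longleftrightarrow>
     (\<exists>V1 V2. V1 \<inter> V2 = {} \<and> V1 \<union> V2 = V \<and>
        (\<forall>h\<in>H. (inp h \<subseteq> V1 \<and> outp h \<subseteq> V2) \<or> (inp h \<subseteq> V2 \<and> outp h \<subseteq> V1)))"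

definition hg_vertex_bipartite ::
  "'v set \<Rightarrow> 'h set \<Rightarrow> ('h \<Rightarrow> 'v set) \<Rightarrow> ('h \<Rightarrow> 'v set) \<Rightarrow> bool" where
  "hg_vertex_bipartite V H inp outp \<longleftrightarrow>
     (\<exists>H1 H2. H1 \<inter> H2 = {} \<and> H1 \<union> H2 = H \<and>
        (\<forall>v\<in>V.
           ((\<forall>h\<in>H. v \<in> inp h \<longrightarrow> h \<in> H1) \<and> (\<forall>h\<in>H. v \<in> outp h \<longrightarrow> h \<in> H2)) \<or>
           ((\<forall>h\<in>H. v \<in> inp h \<longrightarrow> h \<in> H2) \<and> (\<forall>h\<in>H. v \<in> outp h \<longrightarrow> h \<in> H1))))"

end

theory Submission
  imports Defs
begin

text \<open>If \<open>\<Gamma>\<close> is bipartite with sides \<open>V\<^sub>1, V\<^sub>2\<close>, reorient every hyperedge to run from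
  \<open>V\<^sub>1\<close> to \<open>V\<^sub>2\<close>: then vertices of \<open>V\<^sub>1\<close> are only inputs and vertices of \<open>V\<^sub>2\<close> only outputs,
  so \<open>\<H>\<^sub>1 = \<H>\<close>, \<open>\<H>\<^sub>2 = {}\<close> is a vertex-bipartition. Conversely, given a vertex-bipartition
  \<open>\<H>\<^sub>1, \<H>\<^sub>2\<close>, let \<open>V\<^sub>1\<close> be the vertices that are inputs only of \<open>\<H>\<^sub>1\<close> and outputs only of
  \<open>\<H>\<^sub>2\<close>; then hyperedges of \<open>\<H>\<^sub>1\<close> run from \<open>V\<^sub>1\<close> to its complement and those of \<open>\<H>\<^sub>2\<close>
  the other way. Bipartiteness itself does not depend on the orientation.\<close>

lemma hg_bipartite_reorient_iff:
  "hg_bipartite V H (reorient_in S inp outp) (reorient_out S inp outp) \<longleftrightarrow>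
   hg_bipartite V H inp outp"
proof -
  have "(reorient_in S inp outp h \<subseteq> V1 \<and> reorient_out S inp outp h \<subseteq> V2 \<or>
         reorient_in S inp outp h \<subseteq> V2 \<and> reorient_out S inp outp h \<subseteq> V1)
    \<longleftrightarrow> (inp h \<subseteq> V1 \<and> outp h \<subseteq> V2 \<or> inp h \<subseteq> V2 \<and> outp h \<subseteq> V1)" for V1 V2 h
    unfolding reorient_in_def reorient_out_def by auto
  then show ?thesis
    unfolding hg_bipartite_def by simp
qed

lemma reorient_subset:
  assumes "\<forall>h\<in>H. inp h \<subseteq> V \<and> outp h \<subseteq> V"
  shows "\<forall>h\<in>H. reorient_in S inp outp h \<subseteq> V \<and> reorient_out S inp outp h \<subseteq> V"
  using assms unfolding reorient_in_def reorient_out_def by auto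

lemma reorient_from_side:
  assumes "\<forall>h\<in>H. (inp h \<subseteq> V1 \<and> outp h \<subseteq> V2) \<or> (inp h \<subseteq> V2 \<and> outp h \<subseteq> V1)"
    and "T = {h\<in>H. \<not> (inp h \<subseteq> V1 \<and> outp h \<subseteq> V2)}"
  shows "\<forall>h\<in>H. reorient_in T inp outp h \<subseteq> V1 \<and> reorient_out T inp outp h \<subseteq> V2"
  using assms unfolding reorient_in_def reorient_out_def by auto

lemma hg_vertex_bipartite_if_inputs_in_side:
  assumes "\<forall>h\<in>H. inp h \<subseteq> A \<and> outp h \<inter> A = {}"
  shows "hg_vertex_bipartite V H inp outp"
  unfolding hg_vertex_bipartite_def
proof (rule exI[of _ H], rule exI[of _ "{}"], intro conjI ballI)
  fix v
  show "((\<forall>h\<in>H. v \<in> inp h \<longrightarrow> h \<in> H) \<and> (\<forall>h\<in>H. v \<in> outp h \<longrightarrow> h \<in> {})) \<or>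
        ((\<forall>h\<in>H. v \<in> inp h \<longrightarrow> h \<in> {}) \<and> (\<forall>h\<in>H. v \<in> outp h \<longrightarrow> h \<in> H))"
    using assms by (cases "v \<in> A") blast+
qed auto

lemma hg_bipartite_imp_vertex_bipartite_reorient:
  assumes "hg_bipartite V H inp outp"
  shows "\<exists>S\<subseteq>H. hg_vertex_bipartite V H (reorient_in S inp outp) (reorient_out S inp outp)"
proof -
  obtain V1 V2 where disjoint: "V1 \<inter> V2 = {}"
    and sides: "\<forall>h\<in>H. (inp h \<subseteq> V1 \<and> outp h \<subseteq> V2) \<or> (inp h \<subseteq> V2 \<and> outp h \<subseteq> V1)"
    using assms unfolding hg_bipartite_def by blast
  define T where "T = {h\<in>H. \<not> (inp h \<subseteq> V1 \<and> outp h \<subseteq> V2)}"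
  have "\<forall>h\<in>H. reorient_in T inp outp h \<subseteq> V1 \<and> reorient_out T inp outp h \<inter> V1 = {}"
    using reorient_from_side[OF sides T_def] disjoint by blast
  then have "hg_vertex_bipartite V H (reorient_in T inp outp) (reorient_out T inp outp)"
    by (rule hg_vertex_bipartite_if_inputs_in_side)
  moreover have "T \<subseteq> H"
    unfolding T_def by blast
  ultimately show ?thesis
    by blast
qed

lemma hg_vertex_bipartite_imp_bipartite:
  assumes within: "\<forall>h\<in>H. inp h \<subseteq> V \<and> outp h \<subseteq> V"
    and "hg_vertex_bipartite V H inp outp"
  shows "hg_bipartite V H inp outp"
proof -
  obtain H1 H2 where disjoint: "H1 \<inter> H2 = {}" and cover: "H1 \<union> H2 = H"
    and types: "\<forall>v\<in>V. ((\<forall>h\<in>H. v \<in> inp h \<longrightarrow> h \<in> H1) \<and> (\<forall>h\<in>H. v \<in> outp h \<longrightarrow> h \<in> H2)) \<or>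
                       ((\<forall>h\<in>H. v \<in> inp h \<longrightarrow> h \<in> H2) \<and> (\<forall>h\<in>H. v \<in> outp h \<longrightarrow> h \<in> H1))"
    using assms(2) unfolding hg_vertex_bipartite_def by blast
  define V1 where
    "V1 = {v\<in>V. (\<forall>h\<in>H. v \<in> inp h \<longrightarrow> h \<in> H1) \<and> (\<forall>h\<in>H. v \<in> outp h \<longrightarrow> h \<in> H2)}"
  have forward: "inp h \<subseteq> V1 \<and> outp h \<subseteq> V - V1" if "h \<in> H1" for h
    using that within types disjoint cover unfolding V1_def by blast
  have backward: "inp h \<subseteq> V - V1 \<and> outp h \<subseteq> V1" if "h \<in> H2" for h
    using that within types disjoint cover unfolding V1_def by blast
  have "\<forall>h\<in>H. (inp h \<subseteq> V1 \<and> outp h \<subseteq> V - V1) \<or> (inp h \<subseteq> V - V1 \<and> outp h \<subseteq> V1)"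
    using forward backward cover by blast
  moreover have "V1 \<inter> (V - V1) = {}" "V1 \<union> (V - V1) = V"
    unfolding V1_def by auto
  ultimately show ?thesis
    unfolding hg_bipartite_def by blast
qed

theorem mainTheorem2:
  fixes V :: "'v set" and H :: "'h set" and inp outp :: "'h \<Rightarrow> 'v set"
  assumes "oriented_hypergraph V H inp outp"
  shows "(\<exists>S\<subseteq>H. hg_bipartite V H (reorient_in S inp outp) (reorient_out S inp outp))
     \<longleftrightarrow> (\<exists>S\<subseteq>H. hg_vertex_bipartite V H (reorient_in S inp outp) (reorient_out S inp outp))"
proof
  assume "\<exists>S\<subseteq>H. hg_bipartite V H (reorient_in S inp outp) (reorient_out S inp outp)"
  then have "hg_bipartite V H inp outp"
    using hg_bipartite_reorient_iff by blast
  then show "\<exists>S\<subseteq>H. hg_vertex_bipartite V H (reorient_in S inp outp) (reorient_out S inp outp)"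
    by (rule hg_bipartite_imp_vertex_bipartite_reorient)
next
  assume "\<exists>S\<subseteq>H. hg_vertex_bipartite V H (reorient_in S inp outp) (reorient_out S inp outp)"
  then obtain S where "S \<subseteq> H"
    and vertex_bipartite: "hg_vertex_bipartite V H (reorient_in S inp outp) (reorient_out S inp outp)"
    by blast
  have "\<forall>h\<in>H. inp h \<subseteq> V \<and> outp h \<subseteq> V"
    using assms unfolding oriented_hypergraph_def by blast
  then have "\<forall>h\<in>H. reorient_in S inp outp h \<subseteq> V \<and> reorient_out S inp outp h \<subseteq> V"
    by (rule reorient_subset)
  then have "hg_bipartite V H (reorient_in S inp outp) (reorient_out S inp outp)"
    using vertex_bipartite by (rule hg_vertex_bipartite_imp_bipartite)
  with \<open>S \<subseteq> H\<close> show "\<exists>S\<subseteq>H. hg_bipartite V H (reorient_in S inp outp) (reorient_out S inp outp)"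
    by blast
qed

end
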